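(* Let $A\in C^\infty(\mathbb R_+\times\mathbb R^n,\mathbb C^{m\times m})\cap L^\infty(\mathbb R_+,S^1(\mathbb R^n))$, fix $N>0$, $\nu\in[0,1]$, and assume (A4). Then the fundamental solution $\mathcal E(t,s,\xi)$, defined by $\mathrm D_t\mathcal E(t,s,\xi)=A(t,\xi)\mathcal E(t,s,\xi)$, $\mathcal E(s,s,\xi)=I$, satisfies $$\|\mathcal E(t,0,\xi)\|\le C\exp\big(C'(\log(e+t_\xi))^\nu\big)$$ for some constants $C,C'$, uniformly in $(t,\xi)\in Z_{pd}(N,\nu)$.
   Context: $\mathrm D_t=-i\partial_t$; $\operatorname{Im}B=\frac1{2i}(B-B^* )$, matrix inequalities in the Hermitian sense. $t_\xi\ge0$ is defined implicitly by $(1+t_\xi)|\xi|=N(\log(e+t_\xi))^\nu$ ($t_\xi=0$ if $|\xi|\ge N$), and $Z_{pd}(N,\nu)=\{(t,\xi):0\le t\le t_\xi\}$. (A4): there exist a constant $c$ and a function $g(t)$ with $\int_0^tg(s)\,\mathrm ds\le C(\log(e+t))^\nu$ for all $t\ge0$ such that $\operatorname{Im}A(t,\xi)+c|\xi|I+\frac12g(t)I\ge0$ for all $(t,\xi)\in Z_{pd}(N,\nu)$ (for $N$ sufficiently large). *)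

theory Defs
  imports "HOL-Analysis.Analysis"
begin

definition adjoint_mat :: "complex^'m^'m \<Rightarrow> complex^'m^'m" where
  "adjoint_mat B = (\<chi> i j. cnj (B $ j $ i))"

definition Im_mat :: "complex^'m^'m \<Rightarrow> complex^'m^'m" where
  "Im_mat B = (\<chi> i j. (B $ i $ j - adjoint_mat B $ i $ j) / (2 * \<i>))"

definition herm_psd :: "complex^'m^'m \<Rightarrow> bool" where
  "herm_psd B \<longleftrightarrow> adjoint_mat B = B \<and>
     (\<forall>v :: complex^'m. 0 \<le> Re (\<Sum>i\<in>UNIV. cnj (v $ i) * (B *v v) $ i))"

fun has_partials :: "'a::euclidean_space set \<Rightarrow> ('a \<Rightarrow> 'b::real_normed_vector) \<Rightarrow> 'a list \<Rightarrow> bool" where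
  "has_partials S F [] = continuous_on S F"
| "has_partials S F (v # vs) =
     (\<exists>G. (\<forall>x\<in>S. ((\<lambda>h. F (x + h *\<^sub>R v)) has_vector_derivative G x)
                       (at 0 within {h. x + h *\<^sub>R v \<in> S}))
          \<and> has_partials S G vs)"

definition smooth_on :: "'a::euclidean_space set \<Rightarrow> ('a \<Rightarrow> 'b::real_normed_vector) \<Rightarrow> bool" where
  "smooth_on S F \<longleftrightarrow> (\<forall>vs. set vs \<subseteq> Basis \<longrightarrow> has_partials S F vs)"

definition xi_partial :: "'n::finite \<Rightarrow> (real^'n \<Rightarrow> 'b::real_normed_vector) \<Rightarrow> real^'n \<Rightarrow> 'b" where
  "xi_partial j f \<xi> = vector_derivative (\<lambda>h. f (\<xi> + h *\<^sub>R axis j 1)) (at 0)"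

text \<open>\<partial>_\<xi>^\<alpha> with the multi-index \<alpha> given as a list of coordinate indices.\<close>
fun xi_partials :: "'n::finite list \<Rightarrow> (real^'n \<Rightarrow> 'b::real_normed_vector) \<Rightarrow> real^'n \<Rightarrow> 'b" where
  "xi_partials [] f = f"
| "xi_partials (j # js) f = xi_partial j (xi_partials js f)"

definition Linf_S1 :: "(real \<Rightarrow> real^'n::finite \<Rightarrow> 'b::real_normed_vector) \<Rightarrow> bool" where
  "Linf_S1 A \<longleftrightarrow> (\<forall>js :: 'n list. \<exists>C. \<forall>t\<ge>0. \<forall>\<xi>.
      norm (xi_partials js (A t) \<xi>) \<le> C * (1 + norm \<xi> ^ 2) powr ((1 - real (length js)) / 2))"

definition t_xi :: "real \<Rightarrow> real \<Rightarrow> real \<Rightarrow> real" where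
  "t_xi N \<nu> r = (if r \<ge> N then 0
      else (THE t. t \<ge> 0 \<and> (1 + t) * r = N * (ln (exp 1 + t)) powr \<nu>))"

definition Z_pd :: "real \<Rightarrow> real \<Rightarrow> (real \<times> (real^'n::finite)) set" where
  "Z_pd N \<nu> = {(t, \<xi>). 0 \<le> t \<and> t \<le> t_xi N \<nu> (norm \<xi>)}"

definition A4 :: "(real \<Rightarrow> real^'n::finite \<Rightarrow> complex^'m^'m) \<Rightarrow> real \<Rightarrow> real \<Rightarrow> bool" where
  "A4 A N \<nu> \<longleftrightarrow> (\<exists>c C (g :: real \<Rightarrow> real).
     (\<forall>t\<ge>0. set_integrable lborel {0..t} g \<and>
             (LBINT s:{0..t}. g s) \<le> C * (ln (exp 1 + t)) powr \<nu>) \<and>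
     (\<forall>(t, \<xi>) \<in> Z_pd N \<nu>.
        herm_psd (Im_mat (A t \<xi>) + mat (complex_of_real (c * norm \<xi> + g t / 2)))))"

end

(*
  The energy |E(t)|^2 (Frobenius norm) has derivative 2 Re tr(E^* i A E) = -2 sum_j Im <v_j, A v_j>
  over the columns v_j of E, and (A4) bounds this from above by (2c|xi| + g(t)) |E(t)|^2.
  Integrating the logarithmic derivative gives |E(t)| <= |E(0)| exp(c|xi| t + (1/2) int_0^t g),
  and inside the pseudo-differential zone |xi| t <= (1 + t_xi)|xi| = N (log(e + t_xi))^nu,
  while int_0^t g <= C (log(e + t))^nu <= C (log(e + t_xi))^nu.
*)
theory Submission
  imports Defs
begin

lemma quadratic_form_adjoint_mat:
  fixes B :: "complex^'m^'m"
  shows "(\<Sum>i\<in>UNIV. cnj (v$i) * (adjoint_mat B *v v)$i) = cnj (\<Sum>i\<in>UNIV. cnj (v$i) * (B *v v)$i)"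
proof -
  have "(\<Sum>i\<in>UNIV. cnj (v$i) * (adjoint_mat B *v v)$i) = (\<Sum>i\<in>UNIV. \<Sum>k\<in>UNIV. cnj (v$i) * cnj (B$k$i) * v$k)"
    by (simp add: adjoint_mat_def matrix_vector_mult_def sum_distrib_left mult.assoc)
  also have "\<dots> = (\<Sum>k\<in>UNIV. \<Sum>i\<in>UNIV. cnj (v$i) * cnj (B$k$i) * v$k)"
    by (rule sum.swap)
  also have "\<dots> = cnj (\<Sum>i\<in>UNIV. cnj (v$i) * (B *v v)$i)"
    by (simp add: matrix_vector_mult_def sum_distrib_left mult_ac)
  finally show ?thesis .
qed

lemma Im_eq_diff_cnj: "(q - cnj q) / (2 * \<i>) = complex_of_real (Im q)"
  by (simp add: complex_eq_iff)

lemma quadratic_form_Im_mat: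
  fixes B :: "complex^'m^'m"
  shows "(\<Sum>i\<in>UNIV. cnj (v$i) * (Im_mat B *v v)$i) = of_real (Im (\<Sum>i\<in>UNIV. cnj (v$i) * (B *v v)$i))"
proof -
  have "(\<Sum>i\<in>UNIV. cnj (v$i) * (Im_mat B *v v)$i)
      = ((\<Sum>i\<in>UNIV. cnj (v$i) * (B *v v)$i) - (\<Sum>i\<in>UNIV. cnj (v$i) * (adjoint_mat B *v v)$i)) / (2 * \<i>)"
    by (simp add: Im_mat_def matrix_vector_mult_def sum_distrib_left sum_divide_distrib
        sum_subtractf[symmetric] diff_divide_distrib[symmetric] ring_distribs mult_ac)
  also have "\<dots> = ((\<Sum>i\<in>UNIV. cnj (v$i) * (B *v v)$i) - cnj (\<Sum>i\<in>UNIV. cnj (v$i) * (B *v v)$i)) / (2 * \<i>)"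
    by (simp only: quadratic_form_adjoint_mat)
  also have "\<dots> = of_real (Im (\<Sum>i\<in>UNIV. cnj (v$i) * (B *v v)$i))"
    by (rule Im_eq_diff_cnj)
  finally show ?thesis .
qed

lemma quadratic_form_mat:
  "(\<Sum>i\<in>UNIV. cnj (v$i) * (mat (complex_of_real l) *v v)$i) = of_real (l * (\<Sum>i\<in>UNIV. (cmod (v$i))\<^sup>2))"
proof -
  have "(\<Sum>j\<in>UNIV. (if i = j then c else 0) * v$j) = c * v$i" for i and c :: complex
    by (simp add: if_distrib[of "\<lambda>x. x * _"] cong: if_cong)
  then have row: "(mat (complex_of_real l) *v v) $ i = of_real l * v $ i" for i
    by (simp add: mat_def matrix_vector_mult_def)
  have entry: "cnj z * (of_real l * z) = of_real l * of_real ((cmod z)\<^sup>2)" for z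
    by (simp only: complex_norm_square) (simp add: mult_ac)
  show ?thesis
    by (simp only: row entry of_real_mult of_real_sum sum_distrib_left)
qed

lemma Im_quadratic_form_le_of_herm_psd:
  fixes B :: "complex^'m^'m"
  assumes "herm_psd (Im_mat B + mat (complex_of_real l))"
  shows "- Im (\<Sum>i\<in>UNIV. cnj (v$i) * (B *v v)$i) \<le> l * (\<Sum>i\<in>UNIV. (cmod (v$i))\<^sup>2)"
proof -
  have "0 \<le> Re (\<Sum>i\<in>UNIV. cnj (v$i) * ((Im_mat B + mat (complex_of_real l)) *v v)$i)"
    using assms unfolding herm_psd_def by blast
  also have "\<dots> = Im (\<Sum>i\<in>UNIV. cnj (v$i) * (B *v v)$i) + l * (\<Sum>i\<in>UNIV. (cmod (v$i))\<^sup>2)"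
    by (simp only: matrix_vector_mult_add_rdistrib vector_add_component ring_distribs sum.distrib
        quadratic_form_Im_mat quadratic_form_mat plus_complex.sel Re_complex_of_real)
  finally show ?thesis by linarith
qed

lemma column_matrix_mult: "column j (B ** X) = B *v column j X"
  by (simp add: vec_eq_iff matrix_matrix_mult_def matrix_vector_mult_def column_def)

lemma inner_self_eq_sum_columns:
  fixes X :: "complex^'m^'n"
  shows "inner X X = (\<Sum>j\<in>UNIV. \<Sum>i\<in>UNIV. (cmod (column j X $ i))\<^sup>2)"
proof -
  have "inner X X = (\<Sum>i\<in>UNIV. \<Sum>j\<in>UNIV. (cmod (X$i$j))\<^sup>2)"
    by (simp add: inner_vec_def power2_norm_eq_inner)
  also have "\<dots> = (\<Sum>j\<in>UNIV. \<Sum>i\<in>UNIV. (cmod (X$i$j))\<^sup>2)"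
    by (rule sum.swap)
  finally show ?thesis
    by (simp add: column_def)
qed

lemma mat_i_mult_entry: "(mat \<i> ** Y) $ i $ j = \<i> * Y $ i $ j"
  by (simp add: matrix_matrix_mult_def mat_def if_distrib[of "\<lambda>x. x * _"] cong: if_cong)

lemma inner_mat_i_mult:
  fixes X Y :: "complex^'m^'m"
  shows "inner X (mat \<i> ** Y) = (\<Sum>j\<in>UNIV. - Im (\<Sum>i\<in>UNIV. cnj (column j X $ i) * column j Y $ i))"
proof -
  have "inner X (mat \<i> ** Y) = (\<Sum>i\<in>UNIV. \<Sum>j\<in>UNIV. - Im (cnj (X$i$j) * Y$i$j))"
    by (simp add: inner_vec_def inner_complex_def mat_i_mult_entry algebra_simps)
  also have "\<dots> = (\<Sum>j\<in>UNIV. \<Sum>i\<in>UNIV. - Im (cnj (X$i$j) * Y$i$j))"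
    by (rule sum.swap)
  finally show ?thesis
    by (simp only: column_def vec_lambda_beta Im_sum sum_negf)
qed

lemma inner_mat_i_mult_le_of_herm_psd:
  fixes B X :: "complex^'m^'m"
  assumes "herm_psd (Im_mat B + mat (complex_of_real l))"
  shows "inner X (mat \<i> ** (B ** X)) \<le> l * inner X X"
proof -
  have "inner X (mat \<i> ** (B ** X))
      = (\<Sum>j\<in>UNIV. - Im (\<Sum>i\<in>UNIV. cnj (column j X $ i) * (B *v column j X) $ i))"
    by (simp only: inner_mat_i_mult column_matrix_mult)
  also have "\<dots> \<le> (\<Sum>j\<in>UNIV. l * (\<Sum>i\<in>UNIV. (cmod (column j X $ i))\<^sup>2))"
    by (intro sum_mono Im_quadratic_form_le_of_herm_psd assms)
  also have "\<dots> = l * inner X X"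
    by (simp add: inner_self_eq_sum_columns sum_distrib_left)
  finally show ?thesis .
qed

lemma bilinear_matrix_matrix_mult:
  "bilinear (\<lambda>(B :: 'a::real_algebra_1^'n^'m) (X :: 'a^'p^'n). B ** X)"
  unfolding bilinear_def linear_iff
  by (simp add: vec_eq_iff matrix_matrix_mult_def sum.distrib ring_distribs scaleR_sum_right)

lemma norm_mat_i_mult [simp]: "norm (mat \<i> ** (Y :: complex^'n^'m)) = norm Y"
  by (simp add: norm_vec_def mat_i_mult_entry norm_mult)

lemma mat_1_neq_0: "(mat 1 :: 'a::zero_neq_one^'n^'n) \<noteq> 0"
  by (auto simp: vec_eq_iff mat_def)

lemma has_real_derivative_inner_self:
  assumes "(f has_vector_derivative f') (at x within S)"
  shows "((\<lambda>s. inner (f s) (f s)) has_real_derivative 2 * inner (f x) f') (at x within S)"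
proof -
  have "((\<lambda>s. inner (f s) (f s)) has_derivative
      (\<lambda>h. inner (f x) (h *\<^sub>R f') + inner (h *\<^sub>R f') (f x))) (at x within S)"
    using assms unfolding has_vector_derivative_def by (intro has_derivative_inner)
  moreover have "(\<lambda>h. inner (f x) (h *\<^sub>R f') + inner (h *\<^sub>R f') (f x)) = (*) (2 * inner (f x) f')"
    by (auto simp: inner_commute fun_eq_iff)
  ultimately show ?thesis
    by (simp add: has_field_derivative_def)
qed

lemma pos_of_derivative_ge_linear:
  fixes \<phi> D :: "real \<Rightarrow> real"
  assumes deriv: "\<And>s. s \<in> {0..t} \<Longrightarrow> (\<phi> has_real_derivative D s) (at s within {0..t})"
    and lower: "\<And>s. s \<in> {0..t} \<Longrightarrow> - k * \<phi> s \<le> D s"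
    and pos0: "0 < \<phi> 0" and s: "s \<in> {0..t}"
  shows "0 < \<phi> s"
proof -
  define \<psi> where "\<psi> u = \<phi> u * exp (k * u)" for u
  have "\<psi> 0 \<le> \<psi> s"
  proof (rule DERIV_nonneg_imp_increasing_open[of 0 s \<psi>])
    show "0 \<le> s" using s by simp
  next
    fix u assume u: "0 < u" "u < s"
    then have "(\<phi> has_real_derivative D u) (at u)"
      using deriv[of u] s by (simp add: at_within_Icc_at)
    then have "(\<psi> has_real_derivative (D u + k * \<phi> u) * exp (k * u)) (at u)"
      unfolding \<psi>_def by (auto intro!: derivative_eq_intros simp: algebra_simps)
    moreover have "0 \<le> (D u + k * \<phi> u) * exp (k * u)"
      using lower[of u] u s by (intro mult_nonneg_nonneg) auto
    ultimately show "\<exists>y. DERIV \<psi> u :> y \<and> 0 \<le> y" by blast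
  next
    have "continuous_on {0..t} \<phi>"
      using deriv by (rule DERIV_continuous_on)
    then have "continuous_on {0..s} \<phi>"
      by (rule continuous_on_subset) (use s in auto)
    then show "continuous_on {0..s} \<psi>"
      unfolding \<psi>_def by (intro continuous_intros)
  qed
  with pos0 have "0 < \<phi> s * exp (k * s)"
    by (simp add: \<psi>_def)
  then show ?thesis
    by (simp add: zero_less_mult_iff)
qed

lemma le_exp_integral_of_log_derivative_le:
  fixes \<phi> D a :: "real \<Rightarrow> real"
  assumes t: "0 \<le> t"
    and deriv: "\<And>s. s \<in> {0..t} \<Longrightarrow> (\<phi> has_real_derivative D s) (at s within {0..t})"
    and pos: "\<And>s. s \<in> {0..t} \<Longrightarrow> 0 < \<phi> s"
    and upper: "\<And>s. s \<in> {0..t} \<Longrightarrow> D s \<le> a s * \<phi> s"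
    and a: "(a has_integral I) {0..t}"
  shows "\<phi> t \<le> \<phi> 0 * exp I"
proof -
  have "((\<lambda>s. D s / \<phi> s) has_integral ln (\<phi> t) - ln (\<phi> 0)) {0..t}"
  proof (rule fundamental_theorem_of_calculus[OF t])
    fix s assume "s \<in> {0..t}"
    then have "((\<lambda>u. ln (\<phi> u)) has_real_derivative D s / \<phi> s) (at s within {0..t})"
      using pos deriv by (auto intro!: derivative_eq_intros simp: field_simps)
    then show "((\<lambda>u. ln (\<phi> u)) has_vector_derivative D s / \<phi> s) (at s within {0..t})"
      by (simp add: has_real_derivative_iff_has_vector_derivative)
  qed
  then have "ln (\<phi> t) - ln (\<phi> 0) \<le> I"
    by (rule has_integral_le[OF _ a]) (use pos upper in \<open>simp add: divide_le_eq\<close>)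
  then have "exp (ln (\<phi> t)) \<le> exp (ln (\<phi> 0) + I)"
    by simp
  then show ?thesis
    using pos[of 0] pos[of t] t by (simp add: exp_add)
qed

lemma norm_le_exp_integral_of_matrix_ode:
  fixes A E :: "real \<Rightarrow> complex^'m^'m" and a :: "real \<Rightarrow> real"
  assumes t: "0 \<le> t"
    and ode: "\<And>s. s \<in> {0..t} \<Longrightarrow> (E has_vector_derivative mat \<i> ** (A s ** E s)) (at s within {0..t})"
    and bounded: "\<And>s. s \<in> {0..t} \<Longrightarrow> norm (A s) \<le> M"
    and dissipative: "\<And>s. s \<in> {0..t} \<Longrightarrow> herm_psd (Im_mat (A s) + mat (complex_of_real (a s)))"
    and a: "(a has_integral I) {0..t}"
    and E0: "E 0 \<noteq> 0"
  shows "norm (E t) \<le> norm (E 0) * exp I"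
proof -
  obtain K where "0 < K" and K: "\<And>(B :: complex^'m^'m) (X :: complex^'m^'m). norm (B ** X) \<le> K * norm B * norm X"
    using bilinear_bounded_pos[OF bilinear_matrix_matrix_mult] by blast
  define \<phi> where "\<phi> s = inner (E s) (E s)" for s
  define D where "D s = 2 * inner (E s) (mat \<i> ** (A s ** E s))" for s
  have deriv: "(\<phi> has_real_derivative D s) (at s within {0..t})" if "s \<in> {0..t}" for s
    unfolding \<phi>_def D_def using ode[OF that] by (rule has_real_derivative_inner_self)
  have lower: "- (2 * M * K) * \<phi> s \<le> D s" if "s \<in> {0..t}" for s
  proof -
    have "\<bar>inner (E s) (mat \<i> ** (A s ** E s))\<bar> \<le> norm (E s) * norm (A s ** E s)"
      using Cauchy_Schwarz_ineq2[of "E s" "mat \<i> ** (A s ** E s)"] by simp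
    also have "\<dots> \<le> norm (E s) * (K * norm (A s) * norm (E s))"
      using K by (simp add: mult_left_mono)
    also have "\<dots> = K * norm (A s) * \<phi> s"
      by (simp add: \<phi>_def power2_norm_eq_inner[symmetric] power2_eq_square)
    also have "\<dots> \<le> M * K * \<phi> s"
      using bounded[OF that] \<open>0 < K\<close> by (simp add: \<phi>_def mult_right_mono)
    finally show ?thesis
      unfolding D_def by (simp add: abs_le_iff mult_ac)
  qed
  \<comment> \<open>The bound on \<open>A\<close> is used only here: it keeps the energy away from 0, so that its logarithm exists.\<close>
  have pos: "0 < \<phi> s" if "s \<in> {0..t}" for s
    using pos_of_derivative_ge_linear[OF deriv lower _ that] E0 by (simp add: \<phi>_def)
  have upper: "D s \<le> 2 * a s * \<phi> s" if "s \<in> {0..t}" for s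
    using inner_mat_i_mult_le_of_herm_psd[OF dissipative[OF that], of "E s"]
    by (simp add: D_def \<phi>_def)
  have "(norm (E t))\<^sup>2 \<le> (norm (E 0))\<^sup>2 * exp (2 * I)"
    using le_exp_integral_of_log_derivative_le[OF t deriv pos upper has_integral_mult_right[OF a]]
    by (simp add: \<phi>_def power2_norm_eq_inner)
  then have "(norm (E t))\<^sup>2 \<le> (norm (E 0) * exp I)\<^sup>2"
    by (simp add: power_mult_distrib exp_double)
  then show ?thesis
    by (rule power2_le_imp_le) simp
qed

lemma one_less_exp_1_plus: "0 \<le> (t::real) \<Longrightarrow> 1 < exp 1 + t"
  using exp_gt_one[OF zero_less_one] by linarith

lemma one_le_ln_exp_1_plus: "0 \<le> (t::real) \<Longrightarrow> 1 \<le> ln (exp 1 + t)"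
  using ln_mono[of "exp 1" "exp 1 + t"] by simp

lemma zero_unique_of_derivative_increasing:
  fixes f f' :: "real \<Rightarrow> real"
  assumes deriv: "\<And>x. 0 \<le> x \<Longrightarrow> (f has_real_derivative f' x) (at x)"
    and mono: "\<And>x y. 0 \<le> x \<Longrightarrow> x \<le> y \<Longrightarrow> f' x \<le> f' y"
    and neg: "f 0 < 0"
    and zeros: "0 \<le> t1" "0 \<le> t2" "f t1 = 0" "f t2 = 0"
  shows "t1 = t2"
proof -
  have False if "0 \<le> u" "u < v" "f u = 0" "f v = 0" for u v
  proof -
    have u: "0 < u" using that neg by (metis order_le_less)
    obtain z1 where z1: "0 < z1" "z1 < u" "f u - f 0 = (u - 0) * f' z1"
      using MVT2[OF u, of f f'] deriv by auto
    obtain z2 where z2: "u < z2" "z2 < v" "f v - f u = (v - u) * f' z2"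
      using MVT2[OF \<open>u < v\<close>, of f f'] deriv u by auto
    have "0 < u * f' z1" using z1 neg \<open>f u = 0\<close> by simp
    then have "0 < f' z1" using u by (simp add: zero_less_mult_iff)
    moreover have "f' z2 = 0" using z2 that by simp
    moreover have "f' z1 \<le> f' z2" using mono z1 z2 by simp
    ultimately show False by simp
  qed
  then show ?thesis
    using zeros by (metis linorder_neqE_linordered_idom)
qed

lemma t_xi_equation_solvable:
  fixes N \<nu> r :: real
  assumes N: "0 < N" and \<nu>: "\<nu> \<le> 1" and r: "0 < r" "r < N"
  shows "\<exists>t\<ge>0. (1 + t) * r = N * ln (exp 1 + t) powr \<nu>"
proof -
  define f where "f t = (1 + t) * r - N * ln (exp 1 + t) powr \<nu>" for t
  define M where "M = 2 + 2 * N / r"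
  have M: "2 \<le> M" "2 * N \<le> r * M"
    using N r by (simp_all add: M_def field_simps)
  have "N * ln (exp 1 + M\<^sup>2) powr \<nu> \<le> N * ln (exp 1 + M\<^sup>2)"
    using powr_mono[OF \<nu> one_le_ln_exp_1_plus[of "M\<^sup>2"]] one_le_ln_exp_1_plus[of "M\<^sup>2"] N by simp
  also have "\<dots> \<le> N * ln ((M + 1)\<^sup>2)"
    using M exp_le N by (intro mult_left_mono ln_mono add_pos_nonneg) (auto simp: power2_eq_square algebra_simps)
  also have "\<dots> = N * (2 * ln (M + 1))"
    using M by (simp add: ln_realpow)
  also have "\<dots> \<le> N * (2 * M)"
    using ln_le_minus_one[of "M + 1"] M N by simp
  also have "\<dots> \<le> r * M * M"
    using M by (simp add: mult_right_mono mult.assoc[symmetric])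
  also have "\<dots> \<le> (1 + M\<^sup>2) * r"
    using r by (simp add: power2_eq_square algebra_simps)
  finally have "0 \<le> f (M\<^sup>2)"
    by (simp add: f_def)
  moreover have "f 0 \<le> 0"
    using r by (simp add: f_def)
  moreover have "continuous_on {0..M\<^sup>2} f"
  proof -
    have pos: "0 < exp 1 + t \<and> 0 < ln (exp 1 + t)" if "0 \<le> t" for t :: real
      using one_le_ln_exp_1_plus[OF that] one_less_exp_1_plus[OF that] by simp
    show ?thesis
      unfolding f_def by (intro continuous_intros) (fastforce dest: pos)+
  qed
  ultimately obtain t where "0 \<le> t" "t \<le> M\<^sup>2" "f t = 0"
    using IVT'[of f 0 0 "M\<^sup>2"] by auto
  then show ?thesis
    by (auto simp: f_def)
qed

lemma t_xi_eq:
  fixes N \<nu> r :: real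
  assumes N: "0 < N" and \<nu>: "0 \<le> \<nu>" "\<nu> \<le> 1" and r: "0 < r" "r < N"
  shows "0 \<le> t_xi N \<nu> r \<and> (1 + t_xi N \<nu> r) * r = N * ln (exp 1 + t_xi N \<nu> r) powr \<nu>"
proof -
  define f where "f t = (1 + t) * r - N * ln (exp 1 + t) powr \<nu>" for t
  define f' where "f' t = r - N * \<nu> * ln (exp 1 + t) powr (\<nu> - 1) / (exp 1 + t)" for t
  have deriv: "(f has_real_derivative f' x) (at x)" if "0 \<le> x" for x
  proof -
    have "1 < x + exp 1" using one_less_exp_1_plus[OF that] by (simp add: add.commute)
    then show ?thesis
      using one_le_ln_exp_1_plus[OF that] unfolding f_def f'_def
      by (auto intro!: derivative_eq_intros simp: field_simps)
  qed
  have mono: "f' x \<le> f' y" if "0 \<le> x" "x \<le> y" for x y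
  proof -
    have "ln (exp 1 + y) powr (\<nu> - 1) / (exp 1 + y) \<le> ln (exp 1 + x) powr (\<nu> - 1) / (exp 1 + x)"
      using that \<nu> one_le_ln_exp_1_plus[OF that(1)] one_less_exp_1_plus[OF that(1)]
      by (intro frac_le powr_mono2' ln_mono) (auto simp: add_pos_nonneg)
    then have "N * \<nu> * (ln (exp 1 + y) powr (\<nu> - 1) / (exp 1 + y))
        \<le> N * \<nu> * (ln (exp 1 + x) powr (\<nu> - 1) / (exp 1 + x))"
      using N \<nu> by (intro mult_left_mono) auto
    then show ?thesis
      by (simp add: f'_def)
  qed
  define P where "P t \<longleftrightarrow> 0 \<le> t \<and> (1 + t) * r = N * ln (exp 1 + t) powr \<nu>" for t
  have "\<exists>!t. P t"
  proof (rule ex_ex1I)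
    show "\<exists>t. P t"
      using t_xi_equation_solvable[OF N \<nu>(2) r] by (simp add: P_def)
    show "t1 = t2" if "P t1" "P t2" for t1 t2
      using zero_unique_of_derivative_increasing[OF deriv mono] that r
      by (simp add: P_def f_def)
  qed
  then have "P (THE t. P t)"
    by (rule theI')
  moreover have "t_xi N \<nu> r = (THE t. P t)"
    using r by (simp add: t_xi_def P_def)
  ultimately show ?thesis
    by (simp add: P_def)
qed

lemma norm_mult_le_of_mem_Z_pd:
  assumes Z: "(t, \<xi>) \<in> Z_pd N \<nu>" and N: "0 < N" and \<nu>: "0 \<le> \<nu>" "\<nu> \<le> 1"
  shows "norm \<xi> * t \<le> N * ln (exp 1 + t_xi N \<nu> (norm \<xi>)) powr \<nu>"
proof -
  have t: "0 \<le> t" "t \<le> t_xi N \<nu> (norm \<xi>)"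
    using Z by (auto simp: Z_pd_def)
  consider "N \<le> norm \<xi>" | "norm \<xi> = 0" | "0 < norm \<xi>" "norm \<xi> < N"
    by force
  then show ?thesis
  proof cases
    case 1
    then show ?thesis using t N by (simp add: t_xi_def)
  next
    case 2
    then show ?thesis using N by simp
  next
    case 3
    have "norm \<xi> * t \<le> norm \<xi> * t_xi N \<nu> (norm \<xi>)"
      using t by (simp add: mult_left_mono)
    moreover have "(1 + t_xi N \<nu> (norm \<xi>)) * norm \<xi> = norm \<xi> + norm \<xi> * t_xi N \<nu> (norm \<xi>)"
      by (simp add: algebra_simps)
    ultimately have "norm \<xi> * t \<le> (1 + t_xi N \<nu> (norm \<xi>)) * norm \<xi>"
      using norm_ge_zero[of \<xi>] by linarith
    then show ?thesis
      using t_xi_eq[OF N \<nu> 3] by simp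
  qed
qed

lemma log_bound_of_mem_Z_pd:
  assumes Z: "(t, \<xi>) \<in> Z_pd N \<nu>" and N: "0 < N" and \<nu>: "0 \<le> \<nu>" "\<nu> \<le> 1"
    and G: "G \<le> C * ln (exp 1 + t) powr \<nu>"
  shows "c * norm \<xi> * t + G / 2 \<le> (\<bar>c\<bar> * N + \<bar>C\<bar> / 2) * ln (exp 1 + t_xi N \<nu> (norm \<xi>)) powr \<nu>"
proof -
  define L where "L = ln (exp 1 + t_xi N \<nu> (norm \<xi>)) powr \<nu>"
  have t: "0 \<le> t" "t \<le> t_xi N \<nu> (norm \<xi>)"
    using Z by (auto simp: Z_pd_def)
  have "c * (norm \<xi> * t) \<le> \<bar>c\<bar> * (norm \<xi> * t)"
    using t(1) by (simp add: mult_right_mono)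
  also have "\<dots> \<le> \<bar>c\<bar> * (N * L)"
    using norm_mult_le_of_mem_Z_pd[OF Z N \<nu>] unfolding L_def by (simp add: mult_left_mono)
  finally have c_part: "c * (norm \<xi> * t) \<le> \<bar>c\<bar> * (N * L)" .
  have "G \<le> \<bar>C\<bar> * ln (exp 1 + t) powr \<nu>"
    using G by (smt (verit) mult_right_mono abs_ge_self powr_ge_zero)
  also have "\<dots> \<le> \<bar>C\<bar> * L"
    unfolding L_def using t \<nu> one_le_ln_exp_1_plus[OF t(1)] one_less_exp_1_plus[OF t(1)]
    by (intro mult_left_mono powr_mono2 ln_mono) auto
  finally show ?thesis
    using c_part by (simp add: L_def algebra_simps)
qed

theorem lemma9:
  fixes A :: "real \<Rightarrow> real^'n \<Rightarrow> complex^'m^'m"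
    and N \<nu> :: real
  assumes smooth: "smooth_on {p :: real \<times> (real^'n). fst p \<ge> 0} (\<lambda>p. A (fst p) (snd p))"
    and symb: "Linf_S1 A"
    and N_pos: "N > 0"
    and nu: "0 \<le> \<nu>" "\<nu> \<le> 1"
    and A4: "A4 A N \<nu>"
  shows "\<exists>C C'. \<forall>(E :: real \<Rightarrow> complex^'m^'m) t \<xi>.
     E 0 = mat 1 \<and>
     (\<forall>s\<ge>0. (E has_vector_derivative (mat \<i> ** (A s \<xi> ** E s))) (at s within {0..})) \<and>
     (t, \<xi>) \<in> Z_pd N \<nu>
     \<longrightarrow> norm (E t) \<le> C * exp (C' * (ln (exp 1 + t_xi N \<nu> (norm \<xi>))) powr \<nu>)"
proof -
  obtain c C and g :: "real \<Rightarrow> real" where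
    g: "\<And>t. 0 \<le> t \<Longrightarrow> set_integrable lborel {0..t} g \<and> (LBINT s:{0..t}. g s) \<le> C * ln (exp 1 + t) powr \<nu>"
    and psd: "\<And>t \<xi>. (t, \<xi>) \<in> Z_pd N \<nu> \<Longrightarrow>
      herm_psd (Im_mat (A t \<xi>) + mat (complex_of_real (c * norm \<xi> + g t / 2)))"
    using A4 unfolding A4_def by (metis (no_types, lifting) case_prodD)
  obtain K where K: "\<And>t \<xi>. 0 \<le> t \<Longrightarrow> norm (A t \<xi>) \<le> K * (1 + (norm \<xi>)\<^sup>2) powr (1/2)"
    using symb unfolding Linf_S1_def by (metis xi_partials.simps(1) list.size(3) of_nat_0 diff_zero)
  have "norm (E t) \<le> norm (mat 1 :: complex^'m^'m) * exp ((\<bar>c\<bar> * N + \<bar>C\<bar> / 2) * ln (exp 1 + t_xi N \<nu> (norm \<xi>)) powr \<nu>)"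
    if E0: "E 0 = mat 1"
      and ode: "\<forall>s\<ge>0. (E has_vector_derivative (mat \<i> ** (A s \<xi> ** E s))) (at s within {0..})"
      and Z: "(t, \<xi>) \<in> Z_pd N \<nu>" for E t \<xi>
  proof -
    have t: "0 \<le> t" and Z_s: "\<And>s. s \<in> {0..t} \<Longrightarrow> (s, \<xi>) \<in> Z_pd N \<nu>"
      using Z by (auto simp: Z_pd_def)
    have "((\<lambda>s. c * norm \<xi> + g s / 2) has_integral c * norm \<xi> * t + (LBINT s:{0..t}. g s) / 2) {0..t}"
      using g[OF t] t has_integral_const_real[of "c * norm \<xi>" 0 t]
      by (intro has_integral_add has_integral_divide) (auto simp: set_borel_integral_eq_integral mult.commute)
    then have "norm (E t) \<le> norm (E 0) * exp (c * norm \<xi> * t + (LBINT s:{0..t}. g s) / 2)"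
      using t K ode mat_1_neq_0 E0 psd[OF Z_s]
      by (intro norm_le_exp_integral_of_matrix_ode[where M = "K * (1 + (norm \<xi>)\<^sup>2) powr (1/2)"])
        (auto intro: has_vector_derivative_within_subset)
    also have "\<dots> \<le> norm (mat 1 :: complex^'m^'m) * exp ((\<bar>c\<bar> * N + \<bar>C\<bar> / 2) * ln (exp 1 + t_xi N \<nu> (norm \<xi>)) powr \<nu>)"
      using log_bound_of_mem_Z_pd[OF Z N_pos nu conjunct2[OF g[OF t]], where c = c] E0
      by (simp add: mult_left_mono)
    finally show ?thesis .
  qed
  then show ?thesis
    by blast
qed

end
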